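(* Let $\Gamma\Rightarrow\Delta$ be a saturated upper sequent of a branch $\mathcal{B}$ of a derivation in $\mathsf{CL}$ (with L$>^\star$ and Mon$\forall$) of a sequent $\Rightarrow x_0:A_0$. Then there exist a finite neighbourhood model $\mathcal{M}$ and a realization $(\rho,\sigma)$ of the labels of the branch such that $\mathcal{M}\vDash_{\rho,\sigma}\mathcal{F}$ for every $\mathcal{F}\in\downarrow\Gamma$ and $\mathcal{M}\nvDash_{\rho,\sigma}\mathcal{F}$ for every $\mathcal{F}\in\downarrow\Delta$.
   Context: Syntax: world labels, neighbourhood labels; relational atoms $a\in N(x)$, $x\in a$, $a\subseteq b$; labelled formulas: these, $x:A$, $a\Vdash^\exists A$, $a\Vdash^\forall A$, $x\Vdash_aA|B$, for $A,B\in\mathcal{L}::=p\mid\bot\mid A\wedge B\mid A\lor B\mid A\to B\mid A>B$. The calculus (premisses / conclusion; "fresh": label not in conclusion): initial sequents $x:p,\Gamma\Rightarrow\Delta,x:p$, $x:\bot,\Gamma\Rightarrow\Delta$; G3 rules for $\wedge,\vee,\to$; L$\forall$: $x:A,x\in a,a\Vdash^\forall A,\Gamma\Rightarrow\Delta$ / $x\in a,a\Vdash^\forall A,\Gamma\Rightarrow\Delta$; R$\forall$ (x fresh): $x\in a,\Gamma\Rightarrow\Delta,x:A$ / $\Gamma\Rightarrow\Delta,a\Vdash^\forall A$; L$\exists$ (x fresh): $x\in a,x:A,\Gamma\Rightarrow\Delta$ / $a\Vdash^\exists A,\Gamma\Rightarrow\Delta$; R$\exists$: $x\in a,\Gamma\Rightarrow\Delta,x:A,a\Vdash^\exists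 A$ / $x\in a,\Gamma\Rightarrow\Delta,a\Vdash^\exists A$; R$>$ (a fresh): $a\in N(x),a\Vdash^\exists A,\Gamma\Rightarrow\Delta,x\Vdash_aA|B$ / $\Gamma\Rightarrow\Delta,x:A>B$; L$>^\star$: $a\in N(x),x:A>B,\Gamma\Rightarrow\Delta,a\Vdash^\exists A$ and $a\Vdash^\exists A,x\Vdash_aA|B,a\in N(x),x:A>B,\Gamma\Rightarrow\Delta$ / $a\in N(x),x:A>B,\Gamma\Rightarrow\Delta$; R$|$: $c\in N(x),c\subseteq a,\Gamma\Rightarrow\Delta,x\Vdash_aA|B,c\Vdash^\exists A$ and $c\in N(x),c\subseteq a,\Gamma\Rightarrow\Delta,x\Vdash_aA|B,c\Vdash^\forall A\to B$ / $c\in N(x),c\subseteq a,\Gamma\Rightarrow\Delta,x\Vdash_aA|B$; L$|$ (c fresh): $c\in N(x),c\subseteq a,c\Vdash^\exists A,c\Vdash^\forall A\to B,\Gamma\Rightarrow\Delta$ / $x\Vdash_aA|B,\Gamma\Rightarrow\Delta$; Ref: $a\subseteq a,\Gamma\Rightarrow\Delta$ / $\Gamma\Rightarrow\Delta$; Tr: $c\subseteq a,c\subseteq b,b\subseteq a,\Gamma\Rightarrow\Delta$ / $c\subseteq b,b\subseteq a,\Gamma\Rightarrow\Delta$; L$\subseteq$: $x\in a,a\subseteq b,x\in b,\Gamma\Rightarrow\Delta$ / $x\in a,a\subseteq b,\Gamma\Rightarrow\Delta$; Mon$\forall$: $b\subseteq a,b\Vdash^\forall A,a\Vdash^\forall A,\Gamma\Rightarrow\Delta$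 / $b\subseteq a,a\Vdash^\forall A,\Gamma\Rightarrow\Delta$. For a branch $S_0,\dots,S_k$ with $S_k=\Gamma\Rightarrow\Delta$, $\downarrow\Gamma$ ($\downarrow\Delta$) is the union of the antecedents (succedents) of $S_0,\dots,S_k$. Saturated means: no $x:p$ in $\Gamma\cap\Delta$, no $x:\bot$ in $\Gamma$, and: $x:A\wedge B\in\downarrow\Gamma\Rightarrow x:A,x:B\in\downarrow\Gamma$; $x:A\wedge B\in\downarrow\Delta\Rightarrow x:A$ or $x:B\in\downarrow\Delta$; $x:A\vee B\in\downarrow\Gamma\Rightarrow x:A$ or $x:B\in\downarrow\Gamma$; $x:A\vee B\in\downarrow\Delta\Rightarrow x:A,x:B\in\downarrow\Delta$; $x:A\to B\in\downarrow\Gamma\Rightarrow x:B\in\downarrow\Gamma$ or $x:A\in\downarrow\Delta$; $x:A\to B\in\Delta\Rightarrow x:A\in\downarrow\Gamma$ and $x:B\in\downarrow\Delta$; if $a$ occurs in $\Gamma\cup\Delta$ then $a\subseteq a\in\Gamma$; $a\subseteq b,b\subseteq c\in\Gamma\Rightarrow a\subseteq c\in\Gamma$; $x\in a,a\subseteq b\in\Gamma\Rightarrow x\in b\in\Gamma$; $x\in a,a\Vdash^\forall A\in\Gamma\Rightarrow x:A\in\downarrow\Gamma$; $a\Vdash^\forall A\in\downarrow\Delta\Rightarrow$ some $x$ with $x\in a\in\Gamma$, $x:A\in\downarrow\Delta$; $a\Vdash^\exists A\in\downarrow\Gamma\Rightarrow$ some $x$ with $x\in a\in\Gamma$, $x:A\in\downarrow\Gamma$;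 $x\in a\in\Gamma$, $a\Vdash^\exists A\in\Delta\Rightarrow x:A\in\downarrow\Delta$; $x:A>B\in\downarrow\Delta\Rightarrow$ some $a$ with $a\in N(x)\in\Gamma$, $a\Vdash^\exists A\in\downarrow\Gamma$, $x\Vdash_aA|B\in\Delta$; $a\in N(x),x:A>B\in\Gamma\Rightarrow a\Vdash^\exists A\in\downarrow\Delta$ or ($a\Vdash^\exists A,x\Vdash_aA|B\in\downarrow\Gamma$); $c\in N(x),c\subseteq a\in\Gamma$, $x\Vdash_aA|B\in\Delta\Rightarrow c\Vdash^\exists A\in\Delta$ or $c\Vdash^\forall A\to B\in\downarrow\Delta$; $x\Vdash_aA|B\in\downarrow\Gamma\Rightarrow$ some $c$ with $c\in N(x),c\subseteq a\in\Gamma$, $c\Vdash^\exists A\in\downarrow\Gamma$, $c\Vdash^\forall A\to B\in\Gamma$; $b\subseteq a,a\Vdash^\forall A\in\Gamma\Rightarrow b\Vdash^\forall A\in\Gamma$. Neighbourhood model $\langle W,N,\llbracket\cdot\rrbracket\rangle$: $W\neq\emptyset$, $N:W\to\mathcal{P}(\mathcal{P}(W))$, every $\alpha\in N(x)$ non-empty; $x\Vdash A>B$ iff every $\alpha\in N(x)$ containing an $A$-world has some $\beta\in N(x)$, $\beta\subseteq\alpha$, containing an $A$-world and with all worlds forcing $A\to B$. A realization $(\rho,\sigma)$ maps world labels to worlds and neighbourhood labels to sets of worlds; $\mathcal{M}\vDash_{\rho,\sigma}a\in N(x)$ iff $\sigma(a)\in N(\rho(x))$; $a\subseteq b$ iff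 $\sigma(a)\subseteq\sigma(b)$; $y\in a$ iff $\rho(y)\in\sigma(a)$; $x:A$ iff $\rho(x)\Vdash A$; $a\Vdash^\forall A$ iff all worlds of $\sigma(a)$ force $A$; $a\Vdash^\exists A$ iff some world of $\sigma(a)$ forces $A$; $x\Vdash_aA|B$ iff $\sigma(a)\in N(\rho(x))$ and some $\beta\subseteq\sigma(a)$ contains an $A$-world and all its worlds force $A\to B$. *)

theory Defs
  imports Main "HOL-Library.Multiset"
begin

type_synonym wlab = nat
type_synonym nlab = nat

datatype fm = Atom nat | Bot | Conj fm fm | Disj fm fm | Imp fm fm | Cond fm fm

datatype lf =
    NB nlab wlab              (* a \<in> N(x) *)
  | In wlab nlab              (* x \<in> a *)
  | Sub nlab nlab             (* a \<subseteq> b *)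
  | L wlab fm                 (* x : A *)
  | Ex nlab fm                (* a \<Vdash>\<exists> A *)
  | All nlab fm               (* a \<Vdash>\<forall> A *)
  | Cp wlab nlab fm fm        (* x \<Vdash>_a A|B *)

fun wlabs_lf :: "lf \<Rightarrow> wlab set" where
  "wlabs_lf (NB a x) = {x}"
| "wlabs_lf (In x a) = {x}"
| "wlabs_lf (Sub a b) = {}"
| "wlabs_lf (L x A) = {x}"
| "wlabs_lf (Ex a A) = {}"
| "wlabs_lf (All a A) = {}"
| "wlabs_lf (Cp x a A B) = {x}"

fun nlabs_lf :: "lf \<Rightarrow> nlab set" where
  "nlabs_lf (NB a x) = {a}"
| "nlabs_lf (In x a) = {a}"
| "nlabs_lf (Sub a b) = {a, b}"
| "nlabs_lf (L x A) = {}"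
| "nlabs_lf (Ex a A) = {a}"
| "nlabs_lf (All a A) = {a}"
| "nlabs_lf (Cp x a A B) = {a}"

type_synonym sequent = "lf multiset \<times> lf multiset"

definition wlabs_seq :: "sequent \<Rightarrow> wlab set" where
  "wlabs_seq S = (\<Union>F \<in> set_mset (fst S) \<union> set_mset (snd S). wlabs_lf F)"

definition nlabs_seq :: "sequent \<Rightarrow> nlab set" where
  "nlabs_seq S = (\<Union>F \<in> set_mset (fst S) \<union> set_mset (snd S). nlabs_lf F)"

inductive rule_inst :: "sequent list \<Rightarrow> sequent \<Rightarrow> bool" where
  LConj: "rule_inst [(add_mset (L x A) (add_mset (L x B) G), D)]
                    (add_mset (L x (Conj A B)) G, D)"
| RConj: "rule_inst [(G, add_mset (L x A) D), (G, add_mset (L x B) D)]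
                    (G, add_mset (L x (Conj A B)) D)"
| LDisj: "rule_inst [(add_mset (L x A) G, D), (add_mset (L x B) G, D)]
                    (add_mset (L x (Disj A B)) G, D)"
| RDisj: "rule_inst [(G, add_mset (L x A) (add_mset (L x B) D))]
                    (G, add_mset (L x (Disj A B)) D)"
| LImp: "rule_inst [(G, add_mset (L x A) D), (add_mset (L x B) G, D)]
                   (add_mset (L x (Imp A B)) G, D)"
| RImp: "rule_inst [(add_mset (L x A) G, add_mset (L x B) D)]
                   (G, add_mset (L x (Imp A B)) D)"
| LAll: "rule_inst [(add_mset (L x A) (add_mset (In x a) (add_mset (All a A) G)), D)]
                   (add_mset (In x a) (add_mset (All a A) G), D)"
| RAll: "x \<notin> wlabs_seq (G, add_mset (All a A) D) \<Longrightarrow>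
         rule_inst [(add_mset (In x a) G, add_mset (L x A) D)]
                   (G, add_mset (All a A) D)"
| LEx: "x \<notin> wlabs_seq (add_mset (Ex a A) G, D) \<Longrightarrow>
        rule_inst [(add_mset (In x a) (add_mset (L x A) G), D)]
                  (add_mset (Ex a A) G, D)"
| REx: "rule_inst [(add_mset (In x a) G, add_mset (L x A) (add_mset (Ex a A) D))]
                  (add_mset (In x a) G, add_mset (Ex a A) D)"
| RCond: "a \<notin> nlabs_seq (G, add_mset (L x (Cond A B)) D) \<Longrightarrow>
          rule_inst [(add_mset (NB a x) (add_mset (Ex a A) G), add_mset (Cp x a A B) D)]
                    (G, add_mset (L x (Cond A B)) D)"
| LCond: "rule_inst [(add_mset (NB a x) (add_mset (L x (Cond A B)) G), add_mset (Ex a A) D),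
                     (add_mset (Ex a A) (add_mset (Cp x a A B) (add_mset (NB a x)
                        (add_mset (L x (Cond A B)) G))), D)]
                    (add_mset (NB a x) (add_mset (L x (Cond A B)) G), D)"
| RCp: "rule_inst [(add_mset (NB c x) (add_mset (Sub c a) G),
                      add_mset (Cp x a A B) (add_mset (Ex c A) D)),
                   (add_mset (NB c x) (add_mset (Sub c a) G),
                      add_mset (Cp x a A B) (add_mset (All c (Imp A B)) D))]
                  (add_mset (NB c x) (add_mset (Sub c a) G), add_mset (Cp x a A B) D)"
| LCp: "c \<notin> nlabs_seq (add_mset (Cp x a A B) G, D) \<Longrightarrow>
        rule_inst [(add_mset (NB c x) (add_mset (Sub c a) (add_mset (Ex c A)
                      (add_mset (All c (Imp A B)) G))), D)]
                  (add_mset (Cp x a A B) G, D)"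
| Ref: "rule_inst [(add_mset (Sub a a) G, D)] (G, D)"
| Tr: "rule_inst [(add_mset (Sub c a) (add_mset (Sub c b) (add_mset (Sub b a) G)), D)]
                 (add_mset (Sub c b) (add_mset (Sub b a) G), D)"
| LSub: "rule_inst [(add_mset (In x a) (add_mset (Sub a b) (add_mset (In x b) G)), D)]
                   (add_mset (In x a) (add_mset (Sub a b) G), D)"
| MonAll: "rule_inst [(add_mset (Sub b a) (add_mset (All b A) (add_mset (All a A) G)), D)]
                     (add_mset (Sub b a) (add_mset (All a A) G), D)"

definition step :: "sequent \<Rightarrow> sequent \<Rightarrow> bool" where
  "step S S' \<longleftrightarrow> (\<exists>ps. rule_inst ps S \<and> S' \<in> set ps)"

definition is_branch :: "sequent list \<Rightarrow> wlab \<Rightarrow> fm \<Rightarrow> bool" where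
  "is_branch Ss x0 A0 \<longleftrightarrow> Ss \<noteq> [] \<and> hd Ss = ({#}, {# L x0 A0 #}) \<and>
     (\<forall>i. Suc i < length Ss \<longrightarrow> step (Ss ! i) (Ss ! Suc i))"

definition downG :: "sequent list \<Rightarrow> lf set" where
  "downG Ss = (\<Union>S \<in> set Ss. set_mset (fst S))"

definition downD :: "sequent list \<Rightarrow> lf set" where
  "downD Ss = (\<Union>S \<in> set Ss. set_mset (snd S))"

definition saturated :: "sequent list \<Rightarrow> bool" where
  "saturated Ss \<longleftrightarrow> (let G = fst (last Ss); D = snd (last Ss); dG = downG Ss; dD = downD Ss in
     (\<forall>x p. \<not> (L x (Atom p) \<in># G \<and> L x (Atom p) \<in># D)) \<and>
     (\<forall>x. L x Bot \<notin># G) \<and>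
     (\<forall>x A B. L x (Conj A B) \<in> dG \<longrightarrow> L x A \<in> dG \<and> L x B \<in> dG) \<and>
     (\<forall>x A B. L x (Conj A B) \<in> dD \<longrightarrow> L x A \<in> dD \<or> L x B \<in> dD) \<and>
     (\<forall>x A B. L x (Disj A B) \<in> dG \<longrightarrow> L x A \<in> dG \<or> L x B \<in> dG) \<and>
     (\<forall>x A B. L x (Disj A B) \<in> dD \<longrightarrow> L x A \<in> dD \<and> L x B \<in> dD) \<and>
     (\<forall>x A B. L x (Imp A B) \<in> dG \<longrightarrow> L x B \<in> dG \<or> L x A \<in> dD) \<and>
     (\<forall>x A B. L x (Imp A B) \<in># D \<longrightarrow> L x A \<in> dG \<and> L x B \<in> dD) \<and>
     (\<forall>a. a \<in> nlabs_seq (G, D) \<longrightarrow> Sub a a \<in># G) \<and>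
     (\<forall>a b c. Sub a b \<in># G \<and> Sub b c \<in># G \<longrightarrow> Sub a c \<in># G) \<and>
     (\<forall>x a b. In x a \<in># G \<and> Sub a b \<in># G \<longrightarrow> In x b \<in># G) \<and>
     (\<forall>x a A. In x a \<in># G \<and> All a A \<in># G \<longrightarrow> L x A \<in> dG) \<and>
     (\<forall>a A. All a A \<in> dD \<longrightarrow> (\<exists>x. In x a \<in># G \<and> L x A \<in> dD)) \<and>
     (\<forall>a A. Ex a A \<in> dG \<longrightarrow> (\<exists>x. In x a \<in># G \<and> L x A \<in> dG)) \<and>
     (\<forall>x a A. In x a \<in># G \<and> Ex a A \<in># D \<longrightarrow> L x A \<in> dD) \<and>
     (\<forall>x A B. L x (Cond A B) \<in> dD \<longrightarrow>
        (\<exists>a. NB a x \<in># G \<and> Ex a A \<in> dG \<and> Cp x a A B \<in># D)) \<and>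
     (\<forall>x a A B. NB a x \<in># G \<and> L x (Cond A B) \<in># G \<longrightarrow>
        Ex a A \<in> dD \<or> (Ex a A \<in> dG \<and> Cp x a A B \<in> dG)) \<and>
     (\<forall>x a c A B. NB c x \<in># G \<and> Sub c a \<in># G \<and> Cp x a A B \<in># D \<longrightarrow>
        Ex c A \<in># D \<or> All c (Imp A B) \<in> dD) \<and>
     (\<forall>x a A B. Cp x a A B \<in> dG \<longrightarrow>
        (\<exists>c. NB c x \<in># G \<and> Sub c a \<in># G \<and> Ex c A \<in> dG \<and> All c (Imp A B) \<in># G)) \<and>
     (\<forall>a b A. Sub b a \<in># G \<and> All a A \<in># G \<longrightarrow> All b A \<in># G))"

definition nmodel :: "nat set \<Rightarrow> (nat \<Rightarrow> nat set set) \<Rightarrow> (nat \<Rightarrow> nat set) \<Rightarrow> bool" where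
  "nmodel W N V \<longleftrightarrow> W \<noteq> {} \<and> (\<forall>x\<in>W. N x \<subseteq> Pow W \<and> (\<forall>\<alpha>\<in>N x. \<alpha> \<noteq> {})) \<and>
     (\<forall>p. V p \<subseteq> W)"

primrec forces :: "(nat \<Rightarrow> nat set set) \<Rightarrow> (nat \<Rightarrow> nat set) \<Rightarrow> nat \<Rightarrow> fm \<Rightarrow> bool" where
  "forces N V w (Atom p) = (w \<in> V p)"
| "forces N V w Bot = False"
| "forces N V w (Conj A B) = (forces N V w A \<and> forces N V w B)"
| "forces N V w (Disj A B) = (forces N V w A \<or> forces N V w B)"
| "forces N V w (Imp A B) = (forces N V w A \<longrightarrow> forces N V w B)"
| "forces N V w (Cond A B) =
     (\<forall>\<alpha>\<in>N w. (\<exists>y\<in>\<alpha>. forces N V y A) \<longrightarrow>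
        (\<exists>\<beta>\<in>N w. \<beta> \<subseteq> \<alpha> \<and> (\<exists>y\<in>\<beta>. forces N V y A) \<and>
                   (\<forall>y\<in>\<beta>. forces N V y A \<longrightarrow> forces N V y B)))"

definition realization :: "nat set \<Rightarrow> (wlab \<Rightarrow> nat) \<Rightarrow> (nlab \<Rightarrow> nat set) \<Rightarrow> bool" where
  "realization W \<rho> \<sigma> \<longleftrightarrow> (\<forall>x. \<rho> x \<in> W) \<and> (\<forall>a. \<sigma> a \<subseteq> W)"

fun sat :: "(nat \<Rightarrow> nat set set) \<Rightarrow> (nat \<Rightarrow> nat set) \<Rightarrow> (wlab \<Rightarrow> nat) \<Rightarrow> (nlab \<Rightarrow> nat set)
            \<Rightarrow> lf \<Rightarrow> bool" where
  "sat N V \<rho> \<sigma> (NB a x) = (\<sigma> a \<in> N (\<rho> x))"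
| "sat N V \<rho> \<sigma> (In x a) = (\<rho> x \<in> \<sigma> a)"
| "sat N V \<rho> \<sigma> (Sub a b) = (\<sigma> a \<subseteq> \<sigma> b)"
| "sat N V \<rho> \<sigma> (L x A) = forces N V (\<rho> x) A"
| "sat N V \<rho> \<sigma> (Ex a A) = (\<exists>y\<in>\<sigma> a. forces N V y A)"
| "sat N V \<rho> \<sigma> (All a A) = (\<forall>y\<in>\<sigma> a. forces N V y A)"
| "sat N V \<rho> \<sigma> (Cp x a A B) =
     (\<sigma> a \<in> N (\<rho> x) \<and>
      (\<exists>\<beta>\<in>N (\<rho> x). \<beta> \<subseteq> \<sigma> a \<and> (\<exists>y\<in>\<beta>. forces N V y A) \<and>
                       (\<forall>y\<in>\<beta>. forces N V y (Imp A B))))"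

end

theory Submission
  imports Defs
begin

text \<open>The countermodel is read off the upper sequent \<open>\<Gamma> \<Rightarrow> \<Delta>\<close>. Its worlds are the world
  labels of the branch together with one tag world per neighbourhood label; a label is realized
  by the worlds that \<open>\<Gamma>\<close> puts into it, and the neighbourhoods of \<open>x\<close> are the realizations of
  the labels \<open>a\<close> with \<open>a \<in> N(x)\<close> in \<open>\<Gamma>\<close>. Along the branch a labelled formula either survives up
  to \<open>\<Gamma> \<Rightarrow> \<Delta>\<close> or is decomposed by a rule whose saturation clause records the decomposition;
  this drives the induction on formulas (the truth lemma). The tag worlds make inclusion between
  realizations reflect inclusion atoms of \<open>\<Gamma>\<close>, which the clause for \<open>x \<Vdash>\<^sub>a A|B\<close> in \<open>\<Delta>\<close> needs.\<close>

lemma forces_cong_world: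
  assumes "N w = N w'" "\<And>p. w \<in> V p \<longleftrightarrow> w' \<in> V p"
  shows "forces N V w A = forces N V w' A"
  using assms by (induction A) auto

lemma finite_wlabs_lf: "finite (wlabs_lf F)"
  by (cases F) simp_all

lemma finite_nlabs_lf: "finite (nlabs_lf F)"
  by (cases F) simp_all

section \<open>Propagation along derivation branches\<close>

lemma chain_forward:
  assumes chain: "\<forall>i. Suc i < length xs \<longrightarrow> r (xs ! i) (xs ! Suc i)"
    and keep: "\<And>x y. r x y \<Longrightarrow> P x \<Longrightarrow> P y \<or> Q y"
    and "x \<in> set xs" "P x"
  shows "P (last xs) \<or> (\<exists>y\<in>set xs. Q y)"
proof -
  obtain i where i: "i < length xs" "P (xs ! i)"
    using assms(3,4) by (metis in_set_conv_nth)
  have "j < length xs \<longrightarrow> P (xs ! j) \<or> (\<exists>y\<in>set xs. Q y)" if "i \<le> j" for j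
    using that
  proof (induction j rule: dec_induct)
    case base
    then show ?case using i(2) by blast
  next
    case (step j)
    then show ?case using chain keep[of "xs ! j" "xs ! Suc j"] nth_mem by (metis Suc_lessD)
  qed
  then have "P (xs ! (length xs - 1)) \<or> (\<exists>y\<in>set xs. Q y)"
    using i(1) by simp
  moreover have "xs \<noteq> []"
    using i(1) by auto
  ultimately show ?thesis by (simp add: last_conv_nth)
qed

lemma chain_backward:
  assumes chain: "\<forall>i. Suc i < length xs \<longrightarrow> r (xs ! i) (xs ! Suc i)"
    and keep: "\<And>x y. r x y \<Longrightarrow> P y \<Longrightarrow> P x \<or> Q y"
    and "\<not> P (hd xs)" "x \<in> set xs" "P x"
  shows "\<exists>y\<in>set xs. Q y"
proof -
  have "P (xs ! i) \<Longrightarrow> \<exists>y\<in>set xs. Q y" if "i < length xs" for i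
    using that
  proof (induction i)
    case 0
    then show ?case using assms(3) by (simp add: hd_conv_nth)
  next
    case (Suc i)
    then have "P (xs ! i) \<or> Q (xs ! Suc i)" using chain keep by simp
    then show ?case using Suc nth_mem by (metis Suc_lessD)
  qed
  then show ?thesis
    using assms(4,5) by (metis in_set_conv_nth)
qed

lemma chain_forward_invariant:
  assumes chain: "\<forall>i. Suc i < length xs \<longrightarrow> r (xs ! i) (xs ! Suc i)"
    and keep: "\<And>x y. r x y \<Longrightarrow> P x \<Longrightarrow> P y"
    and "x \<in> set xs" "P x"
  shows "P (last xs)"
  using chain_forward[OF chain, of P "\<lambda>_. False", OF _ assms(3,4)] keep by blast

lemma chain_backward_invariant:
  assumes chain: "\<forall>i. Suc i < length xs \<longrightarrow> r (xs ! i) (xs ! Suc i)"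
    and keep: "\<And>x y. r x y \<Longrightarrow> P y \<Longrightarrow> P x"
    and "\<not> P (hd xs)" "x \<in> set xs"
  shows "\<not> P x"
  using chain_backward[OF chain, of P "\<lambda>_. False", OF _ assms(3,4)] keep by blast

text \<open>Formulas that some rule of CL may drop from the antecedent (resp. succedent) of its
  conclusion; all other formulas are copied into every premiss.\<close>

fun ant_consumed :: "lf \<Rightarrow> bool" where
  "ant_consumed (L x (Conj A B)) = True"
| "ant_consumed (L x (Disj A B)) = True"
| "ant_consumed (L x (Imp A B)) = True"
| "ant_consumed (Ex a A) = True"
| "ant_consumed (Cp x a A B) = True"
| "ant_consumed _ = False"

fun suc_consumed :: "lf \<Rightarrow> bool" where
  "suc_consumed (L x (Conj A B)) = True"
| "suc_consumed (L x (Disj A B)) = True"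
| "suc_consumed (L x (Imp A B)) = True"
| "suc_consumed (L x (Cond A B)) = True"
| "suc_consumed (All a A) = True"
| "suc_consumed _ = False"

fun relational :: "lf \<Rightarrow> bool" where
  "relational (NB a x) = True"
| "relational (In x a) = True"
| "relational (Sub a b) = True"
| "relational _ = False"

lemma step_keeps_ant: "step S S' \<Longrightarrow> F \<in># fst S \<Longrightarrow> \<not> ant_consumed F \<Longrightarrow> F \<in># fst S'"
  by (auto simp: step_def elim!: rule_inst.cases)

lemma step_keeps_suc: "step S S' \<Longrightarrow> F \<in># snd S \<Longrightarrow> \<not> suc_consumed F \<Longrightarrow> F \<in># snd S'"
  by (auto simp: step_def elim!: rule_inst.cases)

lemma step_Imp_suc:
  "step S S' \<Longrightarrow> L x (Imp A B) \<in># snd S \<Longrightarrow>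
    L x (Imp A B) \<in># snd S' \<or> (L x A \<in># fst S' \<and> L x B \<in># snd S')"
  by (auto simp: step_def elim!: rule_inst.cases)

lemma step_NB_ant: "step S S' \<Longrightarrow> NB a x \<in># fst S' \<Longrightarrow> NB a x \<in># fst S \<or> (\<exists>A. Ex a A \<in># fst S')"
  by (auto simp: step_def elim!: rule_inst.cases)

lemma step_Cp_ant: "step S S' \<Longrightarrow> Cp x a A B \<in># fst S' \<Longrightarrow> Cp x a A B \<in># fst S \<or> NB a x \<in># fst S'"
  by (auto simp: step_def elim!: rule_inst.cases)

lemma step_relational_suc: "step S S' \<Longrightarrow> F \<in># snd S' \<Longrightarrow> relational F \<Longrightarrow> F \<in># snd S"
  by (auto simp: step_def elim!: rule_inst.cases)

section \<open>Saturated branches\<close>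

locale saturated_branch =
  fixes Ss :: "sequent list" and x0 :: wlab and A0 :: fm
  assumes branch: "is_branch Ss x0 A0" and saturated: "saturated Ss"
begin

abbreviation \<Gamma> :: "lf multiset" where "\<Gamma> \<equiv> fst (last Ss)"
abbreviation \<Delta> :: "lf multiset" where "\<Delta> \<equiv> snd (last Ss)"

lemmas saturated_clauses = saturated[unfolded saturated_def Let_def]

lemma saturated_Atom: "L x (Atom p) \<in># \<Gamma> \<Longrightarrow> L x (Atom p) \<notin># \<Delta>"
  using saturated_clauses by meson

lemma saturated_Bot: "L x Bot \<notin># \<Gamma>"
  using saturated_clauses by meson

lemma saturated_Conj_ant: "L x (Conj A B) \<in> downG Ss \<Longrightarrow> L x A \<in> downG Ss \<and> L x B \<in> downG Ss"
  using saturated_clauses by meson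

lemma saturated_Conj_suc: "L x (Conj A B) \<in> downD Ss \<Longrightarrow> L x A \<in> downD Ss \<or> L x B \<in> downD Ss"
  using saturated_clauses by meson

lemma saturated_Disj_ant: "L x (Disj A B) \<in> downG Ss \<Longrightarrow> L x A \<in> downG Ss \<or> L x B \<in> downG Ss"
  using saturated_clauses by meson

lemma saturated_Disj_suc: "L x (Disj A B) \<in> downD Ss \<Longrightarrow> L x A \<in> downD Ss \<and> L x B \<in> downD Ss"
  using saturated_clauses by meson

lemma saturated_Imp_ant: "L x (Imp A B) \<in> downG Ss \<Longrightarrow> L x B \<in> downG Ss \<or> L x A \<in> downD Ss"
  using saturated_clauses by meson

lemma saturated_Imp_suc: "L x (Imp A B) \<in># \<Delta> \<Longrightarrow> L x A \<in> downG Ss \<and> L x B \<in> downD Ss"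
  using saturated_clauses by meson

lemma saturated_Sub_refl: "a \<in> nlabs_seq (\<Gamma>, \<Delta>) \<Longrightarrow> Sub a a \<in># \<Gamma>"
  using saturated_clauses by meson

lemma saturated_Sub_trans: "Sub a b \<in># \<Gamma> \<Longrightarrow> Sub b c \<in># \<Gamma> \<Longrightarrow> Sub a c \<in># \<Gamma>"
  using saturated_clauses by meson

lemma saturated_In_Sub: "In x a \<in># \<Gamma> \<Longrightarrow> Sub a b \<in># \<Gamma> \<Longrightarrow> In x b \<in># \<Gamma>"
  using saturated_clauses by meson

lemma saturated_All_ant: "In x a \<in># \<Gamma> \<Longrightarrow> All a A \<in># \<Gamma> \<Longrightarrow> L x A \<in> downG Ss"
  using saturated_clauses by meson

lemma saturated_All_suc: "All a A \<in> downD Ss \<Longrightarrow> \<exists>x. In x a \<in># \<Gamma> \<and> L x A \<in> downD Ss"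
  using saturated_clauses by meson

lemma saturated_Ex_ant: "Ex a A \<in> downG Ss \<Longrightarrow> \<exists>x. In x a \<in># \<Gamma> \<and> L x A \<in> downG Ss"
  using saturated_clauses by meson

lemma saturated_Ex_suc: "In x a \<in># \<Gamma> \<Longrightarrow> Ex a A \<in># \<Delta> \<Longrightarrow> L x A \<in> downD Ss"
  using saturated_clauses by meson

lemma saturated_Cond_suc: "L x (Cond A B) \<in> downD Ss \<Longrightarrow>
      \<exists>a. NB a x \<in># \<Gamma> \<and> Ex a A \<in> downG Ss \<and> Cp x a A B \<in># \<Delta>"
  using saturated_clauses by meson

lemma saturated_Cond_ant: "NB a x \<in># \<Gamma> \<Longrightarrow> L x (Cond A B) \<in># \<Gamma> \<Longrightarrow>
      Ex a A \<in> downD Ss \<or> (Ex a A \<in> downG Ss \<and> Cp x a A B \<in> downG Ss)"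
  using saturated_clauses by meson

lemma saturated_Cp_suc: "NB c x \<in># \<Gamma> \<Longrightarrow> Sub c a \<in># \<Gamma> \<Longrightarrow> Cp x a A B \<in># \<Delta> \<Longrightarrow>
      Ex c A \<in># \<Delta> \<or> All c (Imp A B) \<in> downD Ss"
  using saturated_clauses by meson

lemma saturated_Cp_ant: "Cp x a A B \<in> downG Ss \<Longrightarrow>
      \<exists>c. NB c x \<in># \<Gamma> \<and> Sub c a \<in># \<Gamma> \<and> Ex c A \<in> downG Ss \<and> All c (Imp A B) \<in># \<Gamma>"
  using saturated_clauses by meson

lemma branch_chain: "\<forall>i. Suc i < length Ss \<longrightarrow> step (Ss ! i) (Ss ! Suc i)"
  and branch_root: "hd Ss = ({#}, {#L x0 A0#})"
  and branch_nonempty: "Ss \<noteq> []"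
  using branch unfolding is_branch_def by auto

lemma downG_persists:
  assumes "F \<in> downG Ss" "\<not> ant_consumed F"
  shows "F \<in># \<Gamma>"
proof -
  obtain S where "S \<in> set Ss" "F \<in># fst S"
    using assms(1) unfolding downG_def by blast
  with assms(2) show ?thesis
    using chain_forward_invariant[OF branch_chain, where P = "\<lambda>S. F \<in># fst S"] step_keeps_ant
    by blast
qed

lemma downD_persists:
  assumes "F \<in> downD Ss" "\<not> suc_consumed F"
  shows "F \<in># \<Delta>"
proof -
  obtain S where "S \<in> set Ss" "F \<in># snd S"
    using assms(1) unfolding downD_def by blast
  with assms(2) show ?thesis
    using chain_forward_invariant[OF branch_chain, where P = "\<lambda>S. F \<in># snd S"] step_keeps_suc
    by blast
qed

lemma downD_Imp:
  assumes "L x (Imp A B) \<in> downD Ss"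
  shows "L x A \<in> downG Ss \<and> L x B \<in> downD Ss"
proof -
  obtain S where S: "S \<in> set Ss" "L x (Imp A B) \<in># snd S"
    using assms unfolding downD_def by blast
  have "L x (Imp A B) \<in># \<Delta> \<or> (\<exists>S\<in>set Ss. L x A \<in># fst S \<and> L x B \<in># snd S)"
    using chain_forward[OF branch_chain, where P = "\<lambda>S. L x (Imp A B) \<in># snd S"
        and Q = "\<lambda>S. L x A \<in># fst S \<and> L x B \<in># snd S"] step_Imp_suc S by blast
  then show ?thesis
    using saturated_Imp_suc unfolding downG_def downD_def by blast
qed

lemma downD_not_relational:
  assumes "relational F"
  shows "F \<notin> downD Ss"
proof -
  have "F \<notin># snd (hd Ss)"
    using assms branch_root by auto
  then have "F \<notin># snd S" if "S \<in> set Ss" for S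
    using chain_backward_invariant[OF branch_chain, where P = "\<lambda>S. F \<in># snd S"]
      step_relational_suc[OF _ _ assms] that by blast
  then show ?thesis
    unfolding downD_def by blast
qed

text \<open>A neighbourhood atom enters the branch only through R>, together with some
  \<open>a \<Vdash>\<exists> A\<close>, which saturation then fills with a world.\<close>

lemma NB_inhabited:
  assumes "NB c x \<in># \<Gamma>"
  shows "\<exists>y. In y c \<in># \<Gamma>"
proof -
  have "\<exists>S\<in>set Ss. \<exists>A. Ex c A \<in># fst S"
    using chain_backward[OF branch_chain, where P = "\<lambda>S. NB c x \<in># fst S"
        and Q = "\<lambda>S. \<exists>A. Ex c A \<in># fst S", OF step_NB_ant]
      branch_root last_in_set[OF branch_nonempty] assms by simp
  then show ?thesis
    using saturated_Ex_ant unfolding downG_def by blast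
qed

lemma downG_Cp_NB:
  assumes "Cp x a A B \<in> downG Ss"
  shows "NB a x \<in># \<Gamma>"
proof -
  obtain S where "S \<in> set Ss" "Cp x a A B \<in># fst S"
    using assms unfolding downG_def by blast
  then have "\<exists>S\<in>set Ss. NB a x \<in># fst S"
    using chain_backward[OF branch_chain, where P = "\<lambda>S. Cp x a A B \<in># fst S"
        and Q = "\<lambda>S. NB a x \<in># fst S", OF step_Cp_ant] branch_root by simp
  then show ?thesis
    using downG_persists unfolding downG_def by fastforce
qed

lemma ant_in_downG: "F \<in># \<Gamma> \<Longrightarrow> F \<in> downG Ss"
  unfolding downG_def using branch_nonempty by auto

definition wlabels :: "wlab set" where
  "wlabels = (\<Union>S\<in>set Ss. wlabs_seq S)"

definition nlabels :: "nlab set" where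
  "nlabels = (\<Union>S\<in>set Ss. nlabs_seq S)"

lemma finite_wlabels: "finite wlabels"
  unfolding wlabels_def wlabs_seq_def by (simp add: finite_wlabs_lf)

lemma finite_nlabels: "finite nlabels"
  unfolding nlabels_def nlabs_seq_def by (simp add: finite_nlabs_lf)

lemma downG_wlabels: "F \<in> downG Ss \<Longrightarrow> wlabs_lf F \<subseteq> wlabels"
  unfolding downG_def wlabels_def wlabs_seq_def by blast

lemma downD_wlabels: "F \<in> downD Ss \<Longrightarrow> wlabs_lf F \<subseteq> wlabels"
  unfolding downD_def wlabels_def wlabs_seq_def by blast

lemma x0_in_wlabels: "x0 \<in> wlabels"
  using branch_root branch_nonempty hd_in_set[of Ss]
  unfolding wlabels_def wlabs_seq_def by force

lemma In_wlabels: "In y b \<in># \<Gamma> \<Longrightarrow> y \<in> wlabels"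
  using downG_wlabels[OF ant_in_downG] by fastforce

lemma Sub_nlabels: "Sub a b \<in># \<Gamma> \<Longrightarrow> a \<in> nlabels"
  using ant_in_downG unfolding downG_def nlabels_def nlabs_seq_def by fastforce

section \<open>The countermodel\<close>

text \<open>Worlds are natural numbers: \<open>2 * x\<close> stands for the world label \<open>x\<close>, and \<open>2 * a + 1\<close>
  is a tag world for the neighbourhood label \<open>a\<close>, a copy of some element of \<open>a\<close> (tags of
  empty labels lie in no \<open>\<sigma> b\<close>, so the junk value of \<open>SOME\<close> is harmless). A label \<open>b\<close> is
  realized by its elements together with the tags of its inhabited sublabels, so that
  \<open>\<sigma> c \<subseteq> \<sigma> a\<close> forces \<open>c \<subseteq> a \<in> \<Gamma>\<close>.\<close>

definition worlds :: "nat set" where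
  "worlds = (\<lambda>x. 2 * x) ` wlabels \<union> (\<lambda>a. 2 * a + 1) ` nlabels"

definition label_of :: "nat \<Rightarrow> wlab" where
  "label_of w = (if even w then w div 2 else (SOME y. In y (w div 2) \<in># \<Gamma>))"

definition \<sigma> :: "nlab \<Rightarrow> nat set" where
  "\<sigma> b = {2 * y | y. In y b \<in># \<Gamma>} \<union> {2 * c + 1 | c. Sub c b \<in># \<Gamma> \<and> (\<exists>y. In y c \<in># \<Gamma>)}"

definition nbhd :: "nat \<Rightarrow> nat set set" where
  "nbhd w = {\<sigma> b | b. NB b (label_of w) \<in># \<Gamma>}"

definition val :: "nat \<Rightarrow> nat set" where
  "val p = {w \<in> worlds. L (label_of w) (Atom p) \<in># \<Gamma>}"

definition \<rho> :: "wlab \<Rightarrow> nat" where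
  "\<rho> x = (if x \<in> wlabels then 2 * x else 2 * x0)"

lemma \<rho>_wlabel: "x \<in> wlabels \<Longrightarrow> \<rho> x = 2 * x"
  by (simp add: \<rho>_def)

abbreviation holds :: "nat \<Rightarrow> fm \<Rightarrow> bool" where
  "holds \<equiv> forces nbhd val"

lemma label_of_double [simp]: "label_of (2 * x) = x"
  by (simp add: label_of_def)

lemma double_mem_\<sigma>: "In y b \<in># \<Gamma> \<Longrightarrow> 2 * y \<in> \<sigma> b"
  unfolding \<sigma>_def by blast

lemma label_of_mem_\<sigma>:
  assumes "w \<in> \<sigma> b"
  shows "In (label_of w) b \<in># \<Gamma>"
  using assms unfolding \<sigma>_def
proof (elim UnE CollectE exE conjE)
  fix c y
  assume "w = 2 * c + 1" "Sub c b \<in># \<Gamma>" "In y c \<in># \<Gamma>"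
  moreover from \<open>In y c \<in># \<Gamma>\<close> have "In (SOME y. In y c \<in># \<Gamma>) c \<in># \<Gamma>"
    by (rule someI)
  ultimately show ?thesis
    using saturated_In_Sub by (simp add: label_of_def)
qed simp

lemma \<sigma>_subset_worlds: "\<sigma> b \<subseteq> worlds"
  unfolding \<sigma>_def worlds_def using In_wlabels Sub_nlabels by blast

lemma \<sigma>_mono: "Sub a b \<in># \<Gamma> \<Longrightarrow> \<sigma> a \<subseteq> \<sigma> b"
  unfolding \<sigma>_def using saturated_In_Sub saturated_Sub_trans by blast

lemma \<sigma>_subset_imp_Sub:
  assumes "NB c x \<in># \<Gamma>" "\<sigma> c \<subseteq> \<sigma> a"
  shows "Sub c a \<in># \<Gamma>"
proof -
  have "c \<in> nlabs_seq (\<Gamma>, \<Delta>)"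
    using assms(1) by (force simp: nlabs_seq_def)
  then have "2 * c + 1 \<in> \<sigma> c"
    using saturated_Sub_refl NB_inhabited[OF assms(1)] unfolding \<sigma>_def by blast
  then have "2 * c + 1 \<in> \<sigma> a"
    using assms(2) by blast
  then show ?thesis
    unfolding \<sigma>_def by (auto; presburger)
qed

lemma nbhd_double: "nbhd (2 * x) = {\<sigma> b | b. NB b x \<in># \<Gamma>}"
  by (simp add: nbhd_def)

lemma holds_label_of: "w \<in> \<sigma> b \<Longrightarrow> holds w A = holds (2 * label_of w) A"
  using \<sigma>_subset_worlds In_wlabels[OF label_of_mem_\<sigma>]
  by (intro forces_cong_world) (auto simp: nbhd_def val_def worlds_def)

section \<open>Truth lemma\<close>

definition truthful :: "fm \<Rightarrow> bool" where
  "truthful A \<longleftrightarrow> (\<forall>x\<in>wlabels.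
     (L x A \<in> downG Ss \<longrightarrow> holds (2 * x) A) \<and> (L x A \<in> downD Ss \<longrightarrow> \<not> holds (2 * x) A))"

lemma truthfulI:
  assumes "\<And>x. x \<in> wlabels \<Longrightarrow> L x A \<in> downG Ss \<Longrightarrow> holds (2 * x) A"
    and "\<And>x. x \<in> wlabels \<Longrightarrow> L x A \<in> downD Ss \<Longrightarrow> \<not> holds (2 * x) A"
  shows "truthful A"
  using assms unfolding truthful_def by blast

lemma truthful_downG: "truthful A \<Longrightarrow> x \<in> wlabels \<Longrightarrow> L x A \<in> downG Ss \<Longrightarrow> holds (2 * x) A"
  unfolding truthful_def by blast

lemma truthful_downD: "truthful A \<Longrightarrow> x \<in> wlabels \<Longrightarrow> L x A \<in> downD Ss \<Longrightarrow> \<not> holds (2 * x) A"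
  unfolding truthful_def by blast

lemma holds_All_ant:
  assumes "truthful A" "All a A \<in># \<Gamma>" "w \<in> \<sigma> a"
  shows "holds w A"
proof -
  have w: "In (label_of w) a \<in># \<Gamma>"
    using assms(3) by (rule label_of_mem_\<sigma>)
  then have "L (label_of w) A \<in> downG Ss"
    using assms(2) by (rule saturated_All_ant)
  then show ?thesis
    using truthful_downG[OF assms(1) In_wlabels[OF w]] holds_label_of[OF assms(3)] by simp
qed

lemma holds_Ex_suc:
  assumes "truthful A" "Ex a A \<in># \<Delta>" "w \<in> \<sigma> a"
  shows "\<not> holds w A"
proof -
  have w: "In (label_of w) a \<in># \<Gamma>"
    using assms(3) by (rule label_of_mem_\<sigma>)
  then have "L (label_of w) A \<in> downD Ss"
    using assms(2) by (rule saturated_Ex_suc)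
  then show ?thesis
    using truthful_downD[OF assms(1) In_wlabels[OF w]] holds_label_of[OF assms(3)] by simp
qed

lemma holds_Ex_ant:
  assumes "truthful A" "Ex a A \<in> downG Ss"
  shows "\<exists>w\<in>\<sigma> a. holds w A"
proof -
  obtain y where "In y a \<in># \<Gamma>" "L y A \<in> downG Ss"
    using saturated_Ex_ant[OF assms(2)] by blast
  then show ?thesis
    using double_mem_\<sigma> truthful_downG[OF assms(1) In_wlabels] by blast
qed

lemma holds_All_suc:
  assumes "truthful A" "All a A \<in> downD Ss"
  shows "\<exists>w\<in>\<sigma> a. \<not> holds w A"
proof -
  obtain y where "In y a \<in># \<Gamma>" "L y A \<in> downD Ss"
    using saturated_All_suc[OF assms(2)] by blast
  then show ?thesis
    using double_mem_\<sigma> truthful_downD[OF assms(1) In_wlabels] by blast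
qed

lemma truthful_Atom: "truthful (Atom p)"
proof (rule truthfulI)
  fix x
  assume "x \<in> wlabels" "L x (Atom p) \<in> downG Ss"
  then show "holds (2 * x) (Atom p)"
    using downG_persists by (auto simp: val_def worlds_def)
next
  fix x
  assume "L x (Atom p) \<in> downD Ss"
  then have "L x (Atom p) \<in># \<Delta>"
    using downD_persists by simp
  then show "\<not> holds (2 * x) (Atom p)"
    by (auto simp: val_def dest: saturated_Atom)
qed

lemma truthful_Bot: "truthful Bot"
proof (rule truthfulI)
  fix x
  assume "L x Bot \<in> downG Ss"
  then have "L x Bot \<in># \<Gamma>"
    using downG_persists by simp
  then show "holds (2 * x) Bot"
    using saturated_Bot by blast
qed simp

lemma truthful_Conj:
  assumes A: "truthful A" and B: "truthful B"
  shows "truthful (Conj A B)"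
proof (rule truthfulI)
  fix x
  assume "x \<in> wlabels" "L x (Conj A B) \<in> downG Ss"
  then show "holds (2 * x) (Conj A B)"
    unfolding forces.simps
    using saturated_Conj_ant truthful_downG[OF A] truthful_downG[OF B] by blast
next
  fix x
  assume "x \<in> wlabels" "L x (Conj A B) \<in> downD Ss"
  then show "\<not> holds (2 * x) (Conj A B)"
    unfolding forces.simps
    using saturated_Conj_suc truthful_downD[OF A] truthful_downD[OF B] by blast
qed

lemma truthful_Disj:
  assumes A: "truthful A" and B: "truthful B"
  shows "truthful (Disj A B)"
proof (rule truthfulI)
  fix x
  assume "x \<in> wlabels" "L x (Disj A B) \<in> downG Ss"
  then show "holds (2 * x) (Disj A B)"
    unfolding forces.simps
    using saturated_Disj_ant truthful_downG[OF A] truthful_downG[OF B] by blast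
next
  fix x
  assume "x \<in> wlabels" "L x (Disj A B) \<in> downD Ss"
  then show "\<not> holds (2 * x) (Disj A B)"
    unfolding forces.simps
    using saturated_Disj_suc truthful_downD[OF A] truthful_downD[OF B] by blast
qed

lemma truthful_Imp:
  assumes A: "truthful A" and B: "truthful B"
  shows "truthful (Imp A B)"
proof (rule truthfulI)
  fix x
  assume "x \<in> wlabels" "L x (Imp A B) \<in> downG Ss"
  then show "holds (2 * x) (Imp A B)"
    unfolding forces.simps
    using saturated_Imp_ant truthful_downD[OF A] truthful_downG[OF B] by blast
next
  fix x
  assume "x \<in> wlabels" "L x (Imp A B) \<in> downD Ss"
  then show "\<not> holds (2 * x) (Imp A B)"
    unfolding forces.simps
    using downD_Imp truthful_downG[OF A] truthful_downD[OF B] by blast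
qed

lemma Cp_ant_witness:
  assumes "truthful A" "truthful B" "Cp x a A B \<in> downG Ss"
  shows "\<exists>\<beta>\<in>nbhd (2 * x). \<beta> \<subseteq> \<sigma> a \<and> (\<exists>w\<in>\<beta>. holds w A) \<and> (\<forall>w\<in>\<beta>. holds w (Imp A B))"
proof -
  obtain c where c: "NB c x \<in># \<Gamma>" "Sub c a \<in># \<Gamma>" "Ex c A \<in> downG Ss" "All c (Imp A B) \<in># \<Gamma>"
    using saturated_Cp_ant[OF assms(3)] by blast
  have "\<sigma> c \<in> nbhd (2 * x)"
    using c(1) nbhd_double by blast
  moreover have "\<forall>w\<in>\<sigma> c. holds w (Imp A B)"
    using holds_All_ant[OF truthful_Imp[OF assms(1,2)] c(4)] by blast
  ultimately show ?thesis
    using \<sigma>_mono[OF c(2)] holds_Ex_ant[OF assms(1) c(3)] by blast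
qed

lemma Cp_suc_refutes:
  assumes "truthful A" "truthful B" "Cp x a A B \<in># \<Delta>"
    and "\<beta> \<in> nbhd (2 * x)" "\<beta> \<subseteq> \<sigma> a" "\<exists>w\<in>\<beta>. holds w A"
  shows "\<exists>w\<in>\<beta>. \<not> holds w (Imp A B)"
proof -
  obtain c where c: "\<beta> = \<sigma> c" "NB c x \<in># \<Gamma>"
    using assms(4) nbhd_double by auto
  then have "Sub c a \<in># \<Gamma>"
    using \<sigma>_subset_imp_Sub assms(5) by blast
  then consider "Ex c A \<in># \<Delta>" | "All c (Imp A B) \<in> downD Ss"
    using saturated_Cp_suc c(2) assms(3) by blast
  then show ?thesis
  proof cases
    case 1
    then show ?thesis
      using holds_Ex_suc[OF assms(1)] assms(6) c(1) by blast
  next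
    case 2
    then show ?thesis
      using holds_All_suc[OF truthful_Imp[OF assms(1,2)]] c(1) by blast
  qed
qed

lemma truthful_Cond:
  assumes A: "truthful A" and B: "truthful B"
  shows "truthful (Cond A B)"
proof (rule truthfulI)
  fix x
  assume "L x (Cond A B) \<in> downG Ss"
  then have Cond: "L x (Cond A B) \<in># \<Gamma>"
    using downG_persists by simp
  show "holds (2 * x) (Cond A B)"
    unfolding forces.simps
  proof (intro ballI impI)
    fix \<alpha>
    assume "\<alpha> \<in> nbhd (2 * x)" "\<exists>w\<in>\<alpha>. holds w A"
    then obtain a where a: "\<alpha> = \<sigma> a" "NB a x \<in># \<Gamma>" "\<exists>w\<in>\<sigma> a. holds w A"
      using nbhd_double by auto
    then have "Ex a A \<notin># \<Delta>"
      using holds_Ex_suc[OF A] by blast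
    then have "Ex a A \<notin> downD Ss"
      using downD_persists by auto
    then have "Cp x a A B \<in> downG Ss"
      using saturated_Cond_ant[OF a(2) Cond] by blast
    then show "\<exists>\<beta>\<in>nbhd (2 * x). \<beta> \<subseteq> \<alpha> \<and> (\<exists>w\<in>\<beta>. holds w A) \<and> (\<forall>w\<in>\<beta>. holds w A \<longrightarrow> holds w B)"
      using Cp_ant_witness[OF A B] a(1) by simp
  qed
next
  fix x
  assume "L x (Cond A B) \<in> downD Ss"
  then obtain a where a: "NB a x \<in># \<Gamma>" "Ex a A \<in> downG Ss" "Cp x a A B \<in># \<Delta>"
    using saturated_Cond_suc by blast
  show "\<not> holds (2 * x) (Cond A B)"
  proof
    assume "holds (2 * x) (Cond A B)"
    moreover have "\<sigma> a \<in> nbhd (2 * x)"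
      using a(1) nbhd_double by blast
    ultimately obtain \<beta> where "\<beta> \<in> nbhd (2 * x)" "\<beta> \<subseteq> \<sigma> a" "\<exists>w\<in>\<beta>. holds w A"
        "\<forall>w\<in>\<beta>. holds w (Imp A B)"
      using holds_Ex_ant[OF A a(2)] unfolding forces.simps by blast
    then show False
      using Cp_suc_refutes[OF A B a(3)] by blast
  qed
qed

lemma truth_lemma: "truthful A"
  by (induction A)
    (simp_all add: truthful_Atom truthful_Bot truthful_Conj truthful_Disj truthful_Imp truthful_Cond)

lemma sat_downG:
  assumes "F \<in> downG Ss"
  shows "sat nbhd val \<rho> \<sigma> F"
proof (cases F)
  case (NB a x)
  then have "NB a x \<in># \<Gamma>" "x \<in> wlabels"
    using assms downG_persists[OF assms] downG_wlabels[OF assms] by auto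
  then show ?thesis
    using NB nbhd_double by (auto simp: \<rho>_wlabel)
next
  case (In x a)
  then have "In x a \<in># \<Gamma>" "x \<in> wlabels"
    using assms downG_persists[OF assms] downG_wlabels[OF assms] by auto
  then show ?thesis
    using In double_mem_\<sigma> by (simp add: \<rho>_wlabel)
next
  case (Sub a b)
  then show ?thesis
    using assms downG_persists[OF assms] \<sigma>_mono by simp
next
  case (L x A)
  then show ?thesis
    using assms truthful_downG[OF truth_lemma] downG_wlabels[OF assms] by (simp add: \<rho>_wlabel)
next
  case (Ex a A)
  then show ?thesis
    using assms holds_Ex_ant[OF truth_lemma] by simp
next
  case (All a A)
  then show ?thesis
    using assms downG_persists[OF assms] holds_All_ant[OF truth_lemma] by simp
next
  case (Cp x a A B)
  then have "x \<in> wlabels" "\<sigma> a \<in> nbhd (2 * x)"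
    using assms downG_wlabels[OF assms] downG_Cp_NB nbhd_double by auto
  then show ?thesis
    using Cp assms Cp_ant_witness[OF truth_lemma truth_lemma] by (simp add: \<rho>_wlabel)
qed

lemma sat_downD:
  assumes "F \<in> downD Ss"
  shows "\<not> sat nbhd val \<rho> \<sigma> F"
proof (cases F)
  case (L x A)
  then show ?thesis
    using assms truthful_downD[OF truth_lemma] downD_wlabels[OF assms] by (simp add: \<rho>_wlabel)
next
  case (Ex a A)
  then show ?thesis
    using assms downD_persists[OF assms] holds_Ex_suc[OF truth_lemma] by auto
next
  case (All a A)
  then show ?thesis
    using assms holds_All_suc[OF truth_lemma] by auto
next
  case (Cp x a A B)
  then have x: "x \<in> wlabels" and Cp_suc: "Cp x a A B \<in># \<Delta>"
    using assms downD_wlabels[OF assms] downD_persists[OF assms] by auto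
  show ?thesis
  proof
    assume "sat nbhd val \<rho> \<sigma> F"
    then obtain \<beta> where "\<beta> \<in> nbhd (2 * x)" "\<beta> \<subseteq> \<sigma> a" "\<exists>w\<in>\<beta>. holds w A"
        "\<forall>w\<in>\<beta>. holds w (Imp A B)"
      unfolding Cp sat.simps \<rho>_wlabel[OF x] by blast
    then show False
      using Cp_suc_refutes[OF truth_lemma truth_lemma Cp_suc] by blast
  qed
qed (use assms downD_not_relational in auto)

lemma finite_worlds: "finite worlds"
  unfolding worlds_def using finite_wlabels finite_nlabels by simp

lemma nmodel_worlds: "nmodel worlds nbhd val"
  unfolding nmodel_def
proof (intro conjI ballI allI)
  show "worlds \<noteq> {}"
    using x0_in_wlabels unfolding worlds_def by blast
next
  fix w
  show "nbhd w \<subseteq> Pow worlds"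
    unfolding nbhd_def using \<sigma>_subset_worlds by blast
next
  fix w \<alpha>
  assume "\<alpha> \<in> nbhd w"
  then show "\<alpha> \<noteq> {}"
    unfolding nbhd_def using NB_inhabited double_mem_\<sigma> by blast
next
  fix p
  show "val p \<subseteq> worlds"
    unfolding val_def by blast
qed

lemma realization_worlds: "realization worlds \<rho> \<sigma>"
  unfolding realization_def using \<sigma>_subset_worlds x0_in_wlabels
  by (auto simp: \<rho>_def worlds_def)

end

theorem mainTheorem17:
  assumes "is_branch Ss x0 A0"
    and "saturated Ss"
  shows "\<exists>W N V \<rho> \<sigma>. finite W \<and> nmodel W N V \<and> realization W \<rho> \<sigma> \<and>
           (\<forall>F \<in> downG Ss. sat N V \<rho> \<sigma> F) \<and> (\<forall>F \<in> downD Ss. \<not> sat N V \<rho> \<sigma> F)"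
proof -
  interpret saturated_branch Ss x0 A0
    using assms by unfold_locales
  show ?thesis
    using finite_worlds nmodel_worlds realization_worlds sat_downG sat_downD by blast
qed

end
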